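(* Let $\rho$ be a geometric Nielsen 1-chain and $\mathbf p\colon p_0,\dots,p_m$ an edge-path in $T_\rho$ with $p_0=p_m$. If $\mathbf p$ admits an orientation, then $(-1)^{\sigma(\mathbf p)}=1$.
   Context: Setup: $\mathbb F$ finitely generated free, $\Gamma$ finite connected graph with $\pi_1(\Gamma)\cong\mathbb F$, $H\subset\Gamma$ a subgraph, $f$ a homotopy equivalence with $f(H)\subseteq H$ and fixed lift $\tilde f$ to the universal cover $\widetilde\Gamma$, $\widetilde H$ the preimage of $H$. 1-chains $x=\sum_ex_ee$ (reversing orientation negates the coefficient), $\mathrm{supp}(x)=\{e:x_e\ne0\}$; $\pi_H^\perp$ sets coefficients on edges of $\widetilde H$ to $0$; $[u,v]$ is the 1-chain of the reduced edge-path from $u$ to $v$. A geometric Nielsen 1-chain is $\rho=\pi_H^\perp([u,v])$ with $\tilde f(u)=u,\tilde f(v)=v$ satisfying (GNC1) for distinct $g_1,g_2$, $\mathrm{supp}(g_1\rho)\cap\mathrm{supp}(g_2\rho)$ is empty or one edge; (GNC2) each edge $e\notin\widetilde H$ lies in $\mathrm{supp}(g\rho)$ for exactly two $g$, and is the unique common edge of those two supports; (GNC3) some non-commuting $g_1,g_2$ have $\mathrm{supp}(\rho)\cap\mathrm{supp}(g_i\rho)\neq\emptyset$. $T_\rho$: vertex set $\mathbb F$, edge between distinct $g_1,g_2$ iff their translates' supports intersect. For an edge-path $\mathbf p\colon p_0,\dots,p_m$ in $T_\rho$ with $g_j=p_j$ and $e_j$ the unique edge of $\mathrm{supp}(g_{j-1}\rho)\cap\mathrm{supp}(g_j\rho)$,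 $\sigma(\mathbf p)$ is the number of $1\le j\le m$ with $(g_{j-1}\rho)_{e_j}=(g_j\rho)_{e_j}$ (independent of orientation of $e_j$). For closed paths (indices mod $m$), an orientation is a choice for each index $j$ of an orientation of $e_j$ (independent across indices) with $(g_j\rho)_{e_j}=-(g_j\rho)_{e_{j+1}}$ for all $j$. *)

theory Defs
  imports "HOL-Algebra.Group"
begin

text \<open>
The universal cover of Gamma is a tree with vertex set V, edge set E
(each edge carrying a reference orientation from s e to t e). The free group F is the
group G of deck transformations, acting on vertices by act and on edges by ea.
A 1-chain is a function x :: 'e => int giving the coefficient of each edge with respect to
its reference orientation; reversing orientation negates the coefficient.
A directed edge is a pair (e, b): b = True means traversed from s e to t e.
\<close>

definition dends :: "('e \<Rightarrow> 'v) \<Rightarrow> ('e \<Rightarrow> 'v) \<Rightarrow> 'e \<times> bool \<Rightarrow> 'v \<times> 'v" where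
  "dends s t d = (if snd d then (s (fst d), t (fst d)) else (t (fst d), s (fst d)))"

fun is_walk :: "'e set \<Rightarrow> ('e \<Rightarrow> 'v) \<Rightarrow> ('e \<Rightarrow> 'v) \<Rightarrow> 'v \<Rightarrow> ('e \<times> bool) list \<Rightarrow> 'v \<Rightarrow> bool" where
  "is_walk E s t x [] y = (x = y)"
| "is_walk E s t x (d # ds) y =
     (fst d \<in> E \<and> fst (dends s t d) = x \<and> is_walk E s t (snd (dends s t d)) ds y)"

fun reduced :: "('e \<times> bool) list \<Rightarrow> bool" where
  "reduced (d1 # d2 # ds) = (\<not> (fst d1 = fst d2 \<and> snd d1 \<noteq> snd d2) \<and> reduced (d2 # ds))"
| "reduced _ = True"

definition is_tree :: "'v set \<Rightarrow> 'e set \<Rightarrow> ('e \<Rightarrow> 'v) \<Rightarrow> ('e \<Rightarrow> 'v) \<Rightarrow> bool" where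
  "is_tree V E s t \<longleftrightarrow>
     V \<noteq> {} \<and>
     (\<forall>e\<in>E. s e \<in> V \<and> t e \<in> V) \<and>
     (\<forall>x\<in>V. \<forall>y\<in>V. \<exists>ds. is_walk E s t x ds y) \<and>
     (\<forall>x\<in>V. \<forall>ds. is_walk E s t x ds x \<and> reduced ds \<longrightarrow> ds = [])"

definition walk_chain :: "('e \<times> bool) list \<Rightarrow> 'e \<Rightarrow> int" where
  "walk_chain ds e = (\<Sum>d\<leftarrow>ds. if fst d = e then (if snd d then 1 else -1) else 0)"

text \<open>[u,v]: the 1-chain of the reduced edge-path from u to v (unique in a tree).\<close>
definition path_chain :: "'e set \<Rightarrow> ('e \<Rightarrow> 'v) \<Rightarrow> ('e \<Rightarrow> 'v) \<Rightarrow> 'v \<Rightarrow> 'v \<Rightarrow> 'e \<Rightarrow> int" where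
  "path_chain E s t u v = walk_chain (THE ds. is_walk E s t u ds v \<and> reduced ds)"

definition supp :: "'e set \<Rightarrow> ('e \<Rightarrow> int) \<Rightarrow> 'e set" where
  "supp E x = {e \<in> E. x e \<noteq> 0}"

definition piH_perp :: "'e set \<Rightarrow> ('e \<Rightarrow> int) \<Rightarrow> 'e \<Rightarrow> int" where
  "piH_perp EH x = (\<lambda>e. if e \<in> EH then 0 else x e)"

text \<open>Translate of a chain: (g x)_(g e) = x_e.\<close>
definition chain_act :: "('g, 'b) monoid_scheme \<Rightarrow> ('g \<Rightarrow> 'e \<Rightarrow> 'e) \<Rightarrow> 'g \<Rightarrow> ('e \<Rightarrow> int) \<Rightarrow> 'e \<Rightarrow> int" where
  "chain_act G ea g x = (\<lambda>e. x (ea (inv\<^bsub>G\<^esub> g) e))"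

text \<open>G acts freely, cocompactly and by graph automorphisms (preserving the reference
orientation) on the tree: so V/G = Gamma is a finite connected graph, the tree is its
universal cover, and G (= pi_1 Gamma = F) is its deck group.\<close>
definition deck_action ::
  "('g, 'b) monoid_scheme \<Rightarrow> 'v set \<Rightarrow> 'e set \<Rightarrow> ('e \<Rightarrow> 'v) \<Rightarrow> ('e \<Rightarrow> 'v)
    \<Rightarrow> ('g \<Rightarrow> 'v \<Rightarrow> 'v) \<Rightarrow> ('g \<Rightarrow> 'e \<Rightarrow> 'e) \<Rightarrow> bool" where
  "deck_action G V E s t act ea \<longleftrightarrow>
     group G \<and> is_tree V E s t \<and>
     (\<forall>g\<in>carrier G. \<forall>x\<in>V. act g x \<in> V) \<and>
     (\<forall>g\<in>carrier G. \<forall>e\<in>E. ea g e \<in> E) \<and>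
     (\<forall>x\<in>V. act \<one>\<^bsub>G\<^esub> x = x) \<and> (\<forall>e\<in>E. ea \<one>\<^bsub>G\<^esub> e = e) \<and>
     (\<forall>g\<in>carrier G. \<forall>h\<in>carrier G. \<forall>x\<in>V. act (g \<otimes>\<^bsub>G\<^esub> h) x = act g (act h x)) \<and>
     (\<forall>g\<in>carrier G. \<forall>h\<in>carrier G. \<forall>e\<in>E. ea (g \<otimes>\<^bsub>G\<^esub> h) e = ea g (ea h e)) \<and>
     (\<forall>g\<in>carrier G. \<forall>e\<in>E. s (ea g e) = act g (s e) \<and> t (ea g e) = act g (t e)) \<and>
     (\<forall>g\<in>carrier G. \<forall>x\<in>V. act g x = x \<longrightarrow> g = \<one>\<^bsub>G\<^esub>) \<and>
     finite ((\<lambda>x. (\<lambda>g. act g x) ` carrier G) ` V) \<and>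
     finite ((\<lambda>e. (\<lambda>g. ea g e) ` carrier G) ` E)"

text \<open>(VH, EH) is the preimage of a subgraph H of Gamma: a G-invariant subgraph.\<close>
definition lifted_subgraph ::
  "('g, 'b) monoid_scheme \<Rightarrow> 'v set \<Rightarrow> 'e set \<Rightarrow> ('e \<Rightarrow> 'v) \<Rightarrow> ('e \<Rightarrow> 'v)
    \<Rightarrow> ('g \<Rightarrow> 'v \<Rightarrow> 'v) \<Rightarrow> ('g \<Rightarrow> 'e \<Rightarrow> 'e) \<Rightarrow> 'v set \<Rightarrow> 'e set \<Rightarrow> bool" where
  "lifted_subgraph G V E s t act ea VH EH \<longleftrightarrow>
     VH \<subseteq> V \<and> EH \<subseteq> E \<and> (\<forall>e\<in>EH. s e \<in> VH \<and> t e \<in> VH) \<and>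
     (\<forall>g\<in>carrier G. act g ` VH \<subseteq> VH \<and> ea g ` EH \<subseteq> EH)"

text \<open>ftil is the lift of a homotopy equivalence f of Gamma with f(H) in H
(f maps vertices to vertices and each edge to an edge-path; on the tree the edge e is sent,
up to homotopy rel endpoints, to the reduced path from ftil (s e) to ftil (t e)).
Twisted equivariance ftil o g = phi(g) o ftil, with phi an automorphism of G = pi_1,
expresses that f is a homotopy equivalence.\<close>
definition lifted_htpy_equiv ::
  "('g, 'b) monoid_scheme \<Rightarrow> 'v set \<Rightarrow> 'e set \<Rightarrow> ('e \<Rightarrow> 'v) \<Rightarrow> ('e \<Rightarrow> 'v)
    \<Rightarrow> ('g \<Rightarrow> 'v \<Rightarrow> 'v) \<Rightarrow> 'v set \<Rightarrow> 'e set \<Rightarrow> ('v \<Rightarrow> 'v) \<Rightarrow> bool" where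
  "lifted_htpy_equiv G V E s t act VH EH ftil \<longleftrightarrow>
     ftil ` V \<subseteq> V \<and>
     (\<exists>phi. phi \<in> iso G G \<and>
        (\<forall>g\<in>carrier G. \<forall>x\<in>V. ftil (act g x) = act (phi g) (ftil x))) \<and>
     ftil ` VH \<subseteq> VH \<and>
     (\<forall>e\<in>EH. \<forall>ds. is_walk E s t (ftil (s e)) ds (ftil (t e)) \<and> reduced ds
                   \<longrightarrow> fst ` set ds \<subseteq> EH)"

definition geometric_nielsen ::
  "('g, 'b) monoid_scheme \<Rightarrow> 'v set \<Rightarrow> 'e set \<Rightarrow> ('e \<Rightarrow> 'v) \<Rightarrow> ('e \<Rightarrow> 'v)
    \<Rightarrow> ('g \<Rightarrow> 'e \<Rightarrow> 'e) \<Rightarrow> 'e set \<Rightarrow> ('v \<Rightarrow> 'v) \<Rightarrow> ('e \<Rightarrow> int) \<Rightarrow> bool" where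
  "geometric_nielsen G V E s t ea EH ftil \<rho> \<longleftrightarrow>
     (\<exists>u\<in>V. \<exists>v\<in>V. ftil u = u \<and> ftil v = v \<and> \<rho> = piH_perp EH (path_chain E s t u v)) \<and>
     \<comment> \<open>GNC1\<close>
     (\<forall>g1\<in>carrier G. \<forall>g2\<in>carrier G. g1 \<noteq> g2 \<longrightarrow>
        supp E (chain_act G ea g1 \<rho>) \<inter> supp E (chain_act G ea g2 \<rho>) = {} \<or>
        (\<exists>e. supp E (chain_act G ea g1 \<rho>) \<inter> supp E (chain_act G ea g2 \<rho>) = {e})) \<and>
     \<comment> \<open>GNC2\<close>
     (\<forall>e\<in>E - EH. \<exists>g1 g2. g1 \<noteq> g2 \<and>
        {g \<in> carrier G. e \<in> supp E (chain_act G ea g \<rho>)} = {g1, g2} \<and>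
        supp E (chain_act G ea g1 \<rho>) \<inter> supp E (chain_act G ea g2 \<rho>) = {e}) \<and>
     \<comment> \<open>GNC3\<close>
     (\<exists>g1\<in>carrier G. \<exists>g2\<in>carrier G. g1 \<otimes>\<^bsub>G\<^esub> g2 \<noteq> g2 \<otimes>\<^bsub>G\<^esub> g1 \<and>
        supp E \<rho> \<inter> supp E (chain_act G ea g1 \<rho>) \<noteq> {} \<and>
        supp E \<rho> \<inter> supp E (chain_act G ea g2 \<rho>) \<noteq> {})"

definition T_adj ::
  "('g, 'b) monoid_scheme \<Rightarrow> 'e set \<Rightarrow> ('g \<Rightarrow> 'e \<Rightarrow> 'e) \<Rightarrow> ('e \<Rightarrow> int) \<Rightarrow> 'g \<Rightarrow> 'g \<Rightarrow> bool" where
  "T_adj G E ea \<rho> g1 g2 \<longleftrightarrow> g1 \<in> carrier G \<and> g2 \<in> carrier G \<and> g1 \<noteq> g2 \<and>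
     supp E (chain_act G ea g1 \<rho>) \<inter> supp E (chain_act G ea g2 \<rho>) \<noteq> {}"

definition T_path ::
  "('g, 'b) monoid_scheme \<Rightarrow> 'e set \<Rightarrow> ('g \<Rightarrow> 'e \<Rightarrow> 'e) \<Rightarrow> ('e \<Rightarrow> int) \<Rightarrow> (nat \<Rightarrow> 'g) \<Rightarrow> nat \<Rightarrow> bool" where
  "T_path G E ea \<rho> p m \<longleftrightarrow> (\<forall>j\<le>m. p j \<in> carrier G) \<and>
     (\<forall>j\<in>{1..m}. T_adj G E ea \<rho> (p (j - 1)) (p j))"

definition path_edge ::
  "('g, 'b) monoid_scheme \<Rightarrow> 'e set \<Rightarrow> ('g \<Rightarrow> 'e \<Rightarrow> 'e) \<Rightarrow> ('e \<Rightarrow> int) \<Rightarrow> (nat \<Rightarrow> 'g) \<Rightarrow> nat \<Rightarrow> 'e" where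
  "path_edge G E ea \<rho> p j =
     (THE e. supp E (chain_act G ea (p (j - 1)) \<rho>) \<inter> supp E (chain_act G ea (p j) \<rho>) = {e})"

definition sigma ::
  "('g, 'b) monoid_scheme \<Rightarrow> 'e set \<Rightarrow> ('g \<Rightarrow> 'e \<Rightarrow> 'e) \<Rightarrow> ('e \<Rightarrow> int) \<Rightarrow> (nat \<Rightarrow> 'g) \<Rightarrow> nat \<Rightarrow> nat" where
  "sigma G E ea \<rho> p m = card {j \<in> {1..m}.
      chain_act G ea (p (j - 1)) \<rho> (path_edge G E ea \<rho> p j) =
      chain_act G ea (p j) \<rho> (path_edge G E ea \<rho> p j)}"

text \<open>Coefficient with respect to a chosen orientation: True = reference orientation.\<close>
definition ocoef :: "bool \<Rightarrow> int \<Rightarrow> int" where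
  "ocoef b c = (if b then c else - c)"

definition cyc_next :: "nat \<Rightarrow> nat \<Rightarrow> nat" where
  "cyc_next m j = (if j = m then 1 else Suc j)"

definition admits_orientation ::
  "('g, 'b) monoid_scheme \<Rightarrow> 'e set \<Rightarrow> ('g \<Rightarrow> 'e \<Rightarrow> 'e) \<Rightarrow> ('e \<Rightarrow> int) \<Rightarrow> (nat \<Rightarrow> 'g) \<Rightarrow> nat \<Rightarrow> bool" where
  "admits_orientation G E ea \<rho> p m \<longleftrightarrow> (\<exists>orient :: nat \<Rightarrow> bool. \<forall>j\<in>{1..m}.
      ocoef (orient j) (chain_act G ea (p j) \<rho> (path_edge G E ea \<rho> p j)) =
      - ocoef (orient (cyc_next m j)) (chain_act G ea (p j) \<rho> (path_edge G E ea \<rho> p (cyc_next m j))))"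

end

theory Submission
  imports Defs
begin

text \<open>
Every coefficient of a geometric Nielsen 1-chain is 0 or \<open>\<plusminus>1\<close>, because the reduced
path between two vertices of a tree crosses each edge at most once. Fixing the orientation,
let \<open>a\<^sub>j\<close> and \<open>b\<^sub>j\<close> be the (nonzero, hence \<open>\<plusminus>1\<close>) coefficients of \<open>g\<^sub>j\<^sub>-\<^sub>1\<rho>\<close> and \<open>g\<^sub>j\<rho>\<close> on
the oriented edge \<open>e\<^sub>j\<close>. The orientation condition says \<open>b\<^sub>j = -a\<^sub>j\<^sub>+\<^sub>1\<close>, so
\<open>\<Prod> a\<^sub>jb\<^sub>j = (-1)\<^sup>m (\<Prod> a\<^sub>j)\<^sup>2 = (-1)\<^sup>m\<close>; on the other hand \<open>\<Prod> a\<^sub>jb\<^sub>j = (-1)\<^bsup>m - \<sigma>\<^esup>\<close>.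
\<close>

definition flip_dir :: "'e \<times> bool \<Rightarrow> 'e \<times> bool" where
  "flip_dir d = (fst d, \<not> snd d)"

definition reverse_walk :: "('e \<times> bool) list \<Rightarrow> ('e \<times> bool) list" where
  "reverse_walk ds = rev (map flip_dir ds)"

lemma is_walk_append:
  "is_walk E s t x (ds1 @ ds2) z \<longleftrightarrow> (\<exists>y. is_walk E s t x ds1 y \<and> is_walk E s t y ds2 z)"
  by (induction ds1 arbitrary: x) auto

lemma is_walk_reverse_walk: "is_walk E s t x ds y \<Longrightarrow> is_walk E s t y (reverse_walk ds) x"
proof (induction ds arbitrary: x)
  case Nil
  then show ?case by (simp add: reverse_walk_def)
next
  case (Cons d ds)
  then have "is_walk E s t y (reverse_walk ds) (snd (dends s t d))" by simp
  moreover have "is_walk E s t (snd (dends s t d)) [flip_dir d] x"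
    using Cons.prems by (auto simp: dends_def flip_dir_def)
  ultimately show ?case by (auto simp: reverse_walk_def is_walk_append)
qed

lemma is_walk_in_vertices:
  assumes "\<forall>e\<in>E. s e \<in> V \<and> t e \<in> V" and "x \<in> V" and "is_walk E s t x ds y"
  shows "y \<in> V"
  using assms(2,3)
proof (induction ds arbitrary: x)
  case (Cons d ds)
  have "snd (dends s t d) \<in> V" using Cons.prems assms(1) by (auto simp: dends_def)
  then show ?case using Cons by auto
qed simp

lemma reduced_append:
  "reduced (xs @ ys) \<longleftrightarrow> reduced xs \<and> reduced ys \<and>
     (xs \<noteq> [] \<and> ys \<noteq> [] \<longrightarrow> \<not> (fst (last xs) = fst (hd ys) \<and> snd (last xs) \<noteq> snd (hd ys)))"
proof (induction xs)
  case (Cons a xs)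
  then show ?case by (cases xs; cases ys) auto
qed simp

lemma reduced_ConsD: "reduced (d # ds) \<Longrightarrow> reduced ds"
  by (cases ds) auto

lemma reduced_reverse_walk: "reduced ds \<Longrightarrow> reduced (reverse_walk ds)"
proof (induction ds)
  case (Cons d ds)
  then have "reduced (reverse_walk ds @ [flip_dir d])"
    unfolding reduced_append using reduced_ConsD
    by (cases ds) (auto simp: reverse_walk_def flip_dir_def last_rev)
  then show ?case by (simp add: reverse_walk_def)
qed (simp add: reverse_walk_def)

lemma is_walk_reduce:
  "is_walk E s t x ds y \<Longrightarrow> \<exists>ds'. is_walk E s t x ds' y \<and> reduced ds'"
proof (induction ds arbitrary: x)
  case Nil
  then show ?case by (intro exI[of _ "[]"]) simp
next
  case (Cons d ds)
  then obtain ds' where w: "is_walk E s t (snd (dends s t d)) ds' y" and r: "reduced ds'"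
    by auto
  show ?case
  proof (cases "ds' \<noteq> [] \<and> fst d = fst (hd ds') \<and> snd d \<noteq> snd (hd ds')")
    case True
    then obtain d' ds'' where ds': "ds' = d' # ds''" by (cases ds') auto
    \<comment> \<open>the backtrack \<open>d d'\<close> cancels\<close>
    have "snd (dends s t d') = x"
      using w ds' True Cons.prems by (auto simp: dends_def split: if_splits)
    then have "is_walk E s t x ds'' y" using w ds' by simp
    moreover have "reduced ds''" using r ds' reduced_ConsD by blast
    ultimately show ?thesis by blast
  next
    case False
    then have "reduced (d # ds')" using r by (cases ds') auto
    moreover have "is_walk E s t x (d # ds') y" using w Cons.prems by simp
    ultimately show ?thesis by blast
  qed
qed

lemma tree_reduced_walk_unique:
  assumes tree: "is_tree V E s t" and "x \<in> V"
    and "is_walk E s t x ds1 y" "reduced ds1" "is_walk E s t x ds2 y" "reduced ds2"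
  shows "ds1 = ds2"
  using assms(2-)
proof (induction ds1 arbitrary: x ds2)
  case Nil
  then show ?case using tree unfolding is_tree_def by auto
next
  case (Cons d ds1)
  have EV: "\<forall>e\<in>E. s e \<in> V \<and> t e \<in> V" using tree unfolding is_tree_def by auto
  show ?case
  proof (cases ds2)
    case Nil
    then have "y = x" using Cons.prems by simp
    then show ?thesis using Cons.prems tree unfolding is_tree_def by blast
  next
    case (Cons d2 ds2')
    show ?thesis
    proof (cases "d = d2")
      case True
      have "snd (dends s t d) \<in> V" using Cons.prems EV by (auto simp: dends_def)
      then show ?thesis
        using Cons.IH Cons.prems \<open>ds2 = d2 # ds2'\<close> True reduced_ConsD by fastforce
    next
      case False
      \<comment> \<open>otherwise going out along \<open>ds1\<close> and back along \<open>ds2\<close> is a reduced closed walk at \<open>y\<close>\<close>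
      have "y \<in> V" using is_walk_in_vertices[OF EV] Cons.prems by blast
      moreover have "is_walk E s t y (reverse_walk (d # ds1) @ ds2) y"
        using is_walk_reverse_walk[OF Cons.prems(2)] Cons.prems(4) by (auto simp: is_walk_append)
      moreover have "reduced (reverse_walk (d # ds1) @ ds2)"
        unfolding reduced_append
        using reduced_reverse_walk[OF Cons.prems(3)] Cons.prems(5) False \<open>ds2 = d2 # ds2'\<close>
        by (cases d, cases d2) (auto simp: reverse_walk_def flip_dir_def)
      ultimately have "reverse_walk (d # ds1) @ ds2 = []"
        using tree unfolding is_tree_def by blast
      then show ?thesis by (simp add: reverse_walk_def)
    qed
  qed
qed

lemma tree_reduced_walk_distinct_edges:
  assumes tree: "is_tree V E s t" and "x \<in> V" and "is_walk E s t x ds y" and "reduced ds"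
  shows "distinct (map fst ds)"
  using assms(2-)
proof (induction ds arbitrary: x)
  case (Cons d ds)
  have "snd (dends s t d) \<in> V" using Cons.prems tree by (auto simp: dends_def is_tree_def)
  then have IH: "distinct (map fst ds)"
    using Cons.IH[OF _ _ reduced_ConsD] Cons.prems by auto
  have "fst d \<notin> fst ` set ds"
  proof
    assume "fst d \<in> fst ` set ds"
    then obtain d' ys zs where d': "fst d' = fst d" and ds: "ds = ys @ d' # zs"
      by (metis imageE split_list)
    have red: "reduced ((d # ys) @ d' # zs)" using Cons.prems ds by simp
    obtain z where wy: "is_walk E s t x (d # ys) z" and wz: "is_walk E s t z (d' # zs) y"
      using Cons.prems ds is_walk_append[of E s t x "d # ys" "d' # zs" y] by auto
    \<comment> \<open>crossing \<open>fst d\<close> a second time closes up a reduced loop at \<open>x\<close>\<close>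
    have "is_walk E s t x (d # ys) x \<and> reduced (d # ys) \<or>
          is_walk E s t x ((d # ys) @ [d']) x \<and> reduced ((d # ys) @ [d'])"
    proof (cases "d' = d")
      case True
      then show ?thesis using wy wz Cons.prems red reduced_append by fastforce
    next
      case False
      then have "snd (dends s t d') = x"
        using d' wz Cons.prems by (cases d; cases d') (auto simp: dends_def)
      then show ?thesis
        using wy wz red reduced_append[of "(d # ys) @ [d']" zs] by (auto simp: is_walk_append)
    qed
    then show False using Cons.prems(1) tree unfolding is_tree_def by blast
  qed
  then show ?case using IH by simp
qed simp

lemma walk_chain_eq_0: "e \<notin> fst ` set ds \<Longrightarrow> walk_chain ds e = 0"
  by (induction ds) (auto simp: walk_chain_def)

lemma walk_chain_Cons:
  "walk_chain (d # ds) e = (if fst d = e then (if snd d then 1 else -1) else 0) + walk_chain ds e"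
  by (simp add: walk_chain_def)

lemma walk_chain_abs_le_1: "distinct (map fst ds) \<Longrightarrow> \<bar>walk_chain ds e\<bar> \<le> 1"
proof (induction ds)
  case Nil
  then show ?case by (simp add: walk_chain_def)
next
  case (Cons d ds)
  then show ?case by (auto simp: walk_chain_Cons walk_chain_eq_0)
qed

lemma path_chain_abs_le_1:
  assumes tree: "is_tree V E s t" and "u \<in> V" "v \<in> V"
  shows "\<bar>path_chain E s t u v e\<bar> \<le> 1"
proof -
  obtain ds where w: "is_walk E s t u ds v" "reduced ds"
    using tree assms is_walk_reduce unfolding is_tree_def by meson
  have "(THE ds. is_walk E s t u ds v \<and> reduced ds) = ds"
    using w tree_reduced_walk_unique[OF tree \<open>u \<in> V\<close>] by (intro the_equality) auto
  then show ?thesis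
    using walk_chain_abs_le_1 tree_reduced_walk_distinct_edges[OF tree \<open>u \<in> V\<close> w]
    by (simp add: path_chain_def)
qed

lemma geometric_nielsen_coeff_abs_le_1:
  assumes "is_tree V E s t" and "geometric_nielsen G V E s t ea EH ftil \<rho>"
  shows "\<bar>chain_act G ea g \<rho> e\<bar> \<le> 1"
proof -
  obtain u v where "u \<in> V" "v \<in> V" "\<rho> = piH_perp EH (path_chain E s t u v)"
    using assms(2) by (auto simp: geometric_nielsen_def)
  with assms(1) have "\<bar>\<rho> e'\<bar> \<le> 1" for e'
    by (simp add: piH_perp_def path_chain_abs_le_1)
  then show ?thesis by (simp add: chain_act_def)
qed

lemma geometric_nielsen_path_edge_coeff_nonzero:
  assumes "geometric_nielsen G V E s t ea EH ftil \<rho>" and "T_adj G E ea \<rho> (p (j - 1)) (p j)"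
  shows "chain_act G ea (p (j - 1)) \<rho> (path_edge G E ea \<rho> p j) \<noteq> 0"
proof -
  obtain e where
    e: "supp E (chain_act G ea (p (j - 1)) \<rho>) \<inter> supp E (chain_act G ea (p j) \<rho>) = {e}"
    using assms unfolding geometric_nielsen_def T_adj_def by blast
  then have "path_edge G E ea \<rho> p j = e" unfolding path_edge_def by (intro the_equality) auto
  then show ?thesis using e by (auto simp: supp_def)
qed

lemma bij_betw_cyc_next: "bij_betw (cyc_next m) {1..m} {1..m}"
proof (rule bij_betw_imageI)
  show "inj_on (cyc_next m) {1..m}" by (auto simp: inj_on_def cyc_next_def)
  have "k \<in> cyc_next m ` {1..m}" if "k \<in> {1..m}" for k
  proof (cases "k = 1")
    case True
    then show ?thesis using that by (intro image_eqI[of _ _ m]) (auto simp: cyc_next_def)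
  next
    case False
    then show ?thesis using that by (intro image_eqI[of _ _ "k - 1"]) (auto simp: cyc_next_def)
  qed
  moreover have "cyc_next m ` {1..m} \<subseteq> {1..m}" by (auto simp: cyc_next_def)
  ultimately show "cyc_next m ` {1..m} = {1..m}" by blast
qed

lemma prod_signs_eq:
  assumes "finite J"
  shows "(\<Prod>j\<in>J. if P j then 1 else - 1 :: int) = (-1) ^ card {j \<in> J. \<not> P j}"
  using assms by (simp add: prod.If_cases Collect_conj_eq Compl_eq)

lemma cyclic_sign_agreements_even:
  fixes a b :: "nat \<Rightarrow> int"
  assumes sign: "\<And>j. j \<in> {1..m} \<Longrightarrow> a j = 1 \<or> a j = -1"
    and anti: "\<And>j. j \<in> {1..m} \<Longrightarrow> b j = - a (cyc_next m j)"
  shows "(-1::int) ^ card {j \<in> {1..m}. a j = b j} = 1"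
proof -
  let ?I = "{1..m}" and ?S = "{j \<in> {1..m}. a j = b j}"
  have b_sign: "b j = 1 \<or> b j = -1" if "j \<in> ?I" for j
    using sign[OF bij_betw_apply[OF bij_betw_cyc_next that]] anti[OF that] by auto
  have "(\<Prod>j\<in>?I. b j) = (\<Prod>j\<in>?I. - 1 * a (cyc_next m j))"
    by (rule prod.cong) (simp_all add: anti)
  also have "\<dots> = (-1) ^ m * (\<Prod>j\<in>?I. a (cyc_next m j))"
    by (subst prod.distrib) simp
  also have "\<dots> = (-1) ^ m * (\<Prod>j\<in>?I. a j)"
    using prod.reindex_bij_betw[OF bij_betw_cyc_next, of a] by simp
  finally have "(\<Prod>j\<in>?I. a j * b j) = (-1) ^ m * (\<Prod>j\<in>?I. a j * a j)"
    by (simp add: prod.distrib mult_ac)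
  also have "(\<Prod>j\<in>?I. a j * a j) = 1"
    using sign by (intro prod.neutral) fastforce
  finally have "(-1::int) ^ m = (\<Prod>j\<in>?I. a j * b j)"
    by simp
  also have "\<dots> = (\<Prod>j\<in>?I. if a j = b j then 1 else - 1)"
  proof (rule prod.cong)
    fix j assume "j \<in> ?I"
    then show "a j * b j = (if a j = b j then 1 else - 1)" using sign b_sign by fastforce
  qed simp
  also have "\<dots> = (-1) ^ card (?I - ?S)"
  proof -
    have "{j \<in> ?I. a j \<noteq> b j} = ?I - ?S" by blast
    then show ?thesis using prod_signs_eq[of ?I "\<lambda>j. a j = b j"] by simp
  qed
  finally have "(-1::int) ^ card ?S * (-1) ^ m = (-1) ^ card ?S * (-1) ^ card (?I - ?S)"
    by simp
  also have "\<dots> = (-1) ^ (card ?S + card (?I - ?S))"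
    by (simp add: power_add)
  also have "card ?S + card (?I - ?S) = m"
    using card_Diff_subset[of ?S ?I] card_mono[of ?I ?S] by fastforce
  finally show ?thesis by simp
qed

theorem lemma5p5:
  fixes G :: "('g, 'b) monoid_scheme"
    and V :: "'v set" and E :: "'e set" and s t :: "'e \<Rightarrow> 'v"
    and act :: "'g \<Rightarrow> 'v \<Rightarrow> 'v" and ea :: "'g \<Rightarrow> 'e \<Rightarrow> 'e"
    and VH :: "'v set" and EH :: "'e set" and ftil :: "'v \<Rightarrow> 'v"
    and \<rho> :: "'e \<Rightarrow> int" and p :: "nat \<Rightarrow> 'g" and m :: nat
  assumes "deck_action G V E s t act ea"
    and "lifted_subgraph G V E s t act ea VH EH"
    and "lifted_htpy_equiv G V E s t act VH EH ftil"
    and "geometric_nielsen G V E s t ea EH ftil \<rho>"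
    and "T_path G E ea \<rho> p m"
    and "p 0 = p m"
    and "admits_orientation G E ea \<rho> p m"
  shows "(-1::int) ^ sigma G E ea \<rho> p m = 1"
proof -
  have tree: "is_tree V E s t" using assms(1) by (simp add: deck_action_def)
  let ?c = "\<lambda>j. chain_act G ea (p j) \<rho>" and ?e = "path_edge G E ea \<rho> p"
  obtain orient where orient: "\<forall>j\<in>{1..m}.
      ocoef (orient j) (?c j (?e j)) = - ocoef (orient (cyc_next m j)) (?c j (?e (cyc_next m j)))"
    using assms(7) unfolding admits_orientation_def by blast
  define a where "a j = ocoef (orient j) (?c (j - 1) (?e j))" for j
  define b where "b j = ocoef (orient j) (?c j (?e j))" for j
  have sign: "a j = 1 \<or> a j = -1" if "j \<in> {1..m}" for j
  proof -
    have "T_adj G E ea \<rho> (p (j - 1)) (p j)" using assms(5) that by (simp add: T_path_def)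
    then show ?thesis
      using geometric_nielsen_path_edge_coeff_nonzero[OF assms(4), of p j]
        geometric_nielsen_coeff_abs_le_1[OF tree assms(4), of "p (j - 1)" "?e j"]
      by (auto simp: a_def ocoef_def)
  qed
  have anti: "b j = - a (cyc_next m j)" if "j \<in> {1..m}" for j
    \<comment> \<open>\<open>p 0 = p m\<close> makes \<open>p (cyc_next m j - 1) = p j\<close> also for \<open>j = m\<close>\<close>
    using orient that assms(6) by (auto simp: a_def b_def cyc_next_def)
  have "sigma G E ea \<rho> p m = card {j \<in> {1..m}. a j = b j}"
    unfolding sigma_def a_def b_def ocoef_def by (rule arg_cong[where f = card]) auto
  then show ?thesis using cyclic_sign_agreements_even[of m a b, OF sign anti] by simp
qed

end
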